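(* Let $G=(U\cup W,E)$ be a connected bipartite graph with bipartition $U,W$ and $|U|<|W|$. Then the following are equivalent: (i) $G$ is an edge-stable equimatchable graph; (ii) every vertex of $U$ is square-strong; (iii) for every $u\in U$ there exists a nonempty set $S\subseteq N(u)$ such that $|N(S)|\le |S|-1$.
   Context: All graphs are finite and simple. A graph is equimatchable if all its maximal matchings have the same cardinality; an equimatchable graph $G$ is edge-stable if $G\setminus e$ (delete edge $e$, keep vertices) is equimatchable for every $e\in E(G)$. A vertex $v$ of a graph $G$ is strong if every maximal matching of $G$ saturates $v$ (i.e. $v$ is an endpoint of an edge of the matching). A strong vertex $v$ is square-strong if for every $u\in N(v)$, $v$ is strong in $G-u$. $N(u)$ is the neighborhood of $u$, and for a set $S$, $N(S)$ is the union of the neighborhoods of vertices of $S$. *)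

theory Defs
  imports Main
begin

definition simple_graph :: "'a set \<Rightarrow> 'a set set \<Rightarrow> bool" where
  "simple_graph V E \<longleftrightarrow> finite V \<and> (\<forall>e\<in>E. e \<subseteq> V \<and> card e = 2)"

definition connected_graph :: "'a set \<Rightarrow> 'a set set \<Rightarrow> bool" where
  "connected_graph V E \<longleftrightarrow> V \<noteq> {} \<and>
     (\<forall>x\<in>V. \<forall>y\<in>V. (x, y) \<in> {(a, b). {a, b} \<in> E}\<^sup>*)"

definition bipartition :: "'a set \<Rightarrow> 'a set set \<Rightarrow> 'a set \<Rightarrow> 'a set \<Rightarrow> bool" where
  "bipartition V E U W \<longleftrightarrow> U \<inter> W = {} \<and> U \<union> W = V \<and>
     (\<forall>e\<in>E. \<exists>u\<in>U. \<exists>w\<in>W. e = {u, w})"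

definition matching :: "'a set set \<Rightarrow> 'a set set \<Rightarrow> bool" where
  "matching E M \<longleftrightarrow> M \<subseteq> E \<and> (\<forall>e\<in>M. \<forall>f\<in>M. e \<noteq> f \<longrightarrow> e \<inter> f = {})"

definition maximal_matching :: "'a set set \<Rightarrow> 'a set set \<Rightarrow> bool" where
  "maximal_matching E M \<longleftrightarrow> matching E M \<and> (\<forall>e\<in>E - M. \<not> matching E (insert e M))"

definition equimatchable :: "'a set set \<Rightarrow> bool" where
  "equimatchable E \<longleftrightarrow>
     (\<forall>M M'. maximal_matching E M \<and> maximal_matching E M' \<longrightarrow> card M = card M')"

text \<open>Edge deletion keeps all vertices; matchings only depend on the edge set.\<close>
definition edge_stable_equimatchable :: "'a set set \<Rightarrow> bool" where
  "edge_stable_equimatchable E \<longleftrightarrow> equimatchable E \<and> (\<forall>e\<in>E. equimatchable (E - {e}))"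

definition strong_vertex :: "'a set set \<Rightarrow> 'a \<Rightarrow> bool" where
  "strong_vertex E v \<longleftrightarrow> (\<forall>M. maximal_matching E M \<longrightarrow> v \<in> \<Union>M)"

definition delete_vertex :: "'a set set \<Rightarrow> 'a \<Rightarrow> 'a set set" where
  "delete_vertex E u = {e\<in>E. u \<notin> e}"

definition nbhd :: "'a set set \<Rightarrow> 'a \<Rightarrow> 'a set" where
  "nbhd E u = {w. {u, w} \<in> E}"

definition nbhd_set :: "'a set set \<Rightarrow> 'a set \<Rightarrow> 'a set" where
  "nbhd_set E S = (\<Union>u\<in>S. nbhd E u)"

definition square_strong :: "'a set set \<Rightarrow> 'a \<Rightarrow> bool" where
  "square_strong E v \<longleftrightarrow> strong_vertex E v \<and>
     (\<forall>u\<in>nbhd E v. strong_vertex (delete_vertex E u) v)"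

end

theory Submission
  imports Defs
begin

(* In a bipartite graph, u in U is strong exactly when some nonempty S <= N(u) satisfies
   |N(S)| <= |S|: a maximal matching missing u matches N(u) injectively into N(S) - {u}, and
   if every such S has surplus, Hall's theorem matches N(u) into U - {u}, and this matching
   extends to a maximal matching avoiding u.  Applied in G - w, the same criterion with S
   avoiding w describes square-strength; by submodularity of |N(.)|, a tight set A of minimum
   size together with a tight set avoiding a vertex of A has a deficient union, which gives
   (ii) <-> (iii).  If U is square-strong, every maximal matching of G - e is maximal in G and
   saturates U, so G is edge-stable.  Conversely, if G is connected and equimatchable with
   |U| < |W|, a set of maximum deficiency would produce two maximal matchings of different
   sizes, so Hall's condition holds for U; hence U is strong and all maximal matchings have
   |U| edges.  A maximal matching of G - w missing u would then be a maximal matching of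
   G - uw with |U| - 1 edges, while a maximal matching through another edge uw' has |U|. *)

section \<open>Hall's theorem\<close>

lemma inj_on_piecewise:
  assumes "inj_on f A" "inj_on h B" "f ` A \<inter> h ` B = {}"
  shows "inj_on (\<lambda>x. if x \<in> A then f x else h x) (A \<union> B)"
proof (rule inj_onI)
  fix x y assume xy: "x \<in> A \<union> B" "y \<in> A \<union> B"
    and eq: "(if x \<in> A then f x else h x) = (if y \<in> A then f y else h y)"
  show "x = y"
  proof (cases "x \<in> A"; cases "y \<in> A")
    assume "x \<in> A" "y \<in> A" then show ?thesis using eq assms(1) by (simp add: inj_on_eq_iff)
  next
    assume "x \<notin> A" "y \<notin> A" then show ?thesis using eq xy assms(2) by (simp add: inj_on_eq_iff)
  next
    assume "x \<in> A" "y \<notin> A" then show ?thesis using eq xy assms(3) by auto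
  next
    assume "x \<notin> A" "y \<in> A" then show ?thesis using eq xy assms(3) by auto
  qed
qed

lemma hall_step_tight:
  fixes A :: "'a \<Rightarrow> 'b set"
  assumes IH: "\<And>Y (B :: 'a \<Rightarrow> 'b set). Y \<subset> X \<Longrightarrow> \<forall>y\<in>Y. finite (B y) \<Longrightarrow>
                 \<forall>T\<subseteq>Y. card T \<le> card (\<Union>(B ` T)) \<Longrightarrow> \<exists>f. inj_on f Y \<and> (\<forall>y\<in>Y. f y \<in> B y)"
    and X: "finite X" "\<forall>x\<in>X. finite (A x)" "\<forall>T\<subseteq>X. card T \<le> card (\<Union>(A ` T))"
    and T: "T \<subset> X" "T \<noteq> {}" "card (\<Union>(A ` T)) \<le> card T"
  shows "\<exists>f. inj_on f X \<and> (\<forall>x\<in>X. f x \<in> A x)"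
proof -
  define N where "N = \<Union>(A ` T)"
  have "\<forall>T'\<subseteq>T. card T' \<le> card (\<Union>(A ` T'))" "\<forall>x\<in>T. finite (A x)" using X T(1) by auto
  then obtain f1 where f1: "inj_on f1 T" "\<forall>x\<in>T. f1 x \<in> A x"
    using IH[of T A, OF T(1)] by blast
  have "\<forall>R\<subseteq>X - T. card R \<le> card (\<Union>x\<in>R. A x - N)"
  proof (intro allI impI)
    fix R assume R: "R \<subseteq> X - T"
    have "card R + card T = card (R \<union> T)"
      using R T(1) X(1) by (subst card_Un_disjoint) (auto intro: finite_subset)
    also have "\<dots> \<le> card (\<Union>(A ` (R \<union> T)))"
    proof -
      have "R \<union> T \<subseteq> X" using R T(1) by blast
      then show ?thesis using X(3) by blast
    qed
    also have "\<dots> = card ((\<Union>x\<in>R. A x - N) \<union> N)" by (rule arg_cong[of _ _ card]) (auto simp: N_def)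
    also have "\<dots> \<le> card (\<Union>x\<in>R. A x - N) + card T"
      using card_Un_le T(3) unfolding N_def by (meson add_left_mono le_trans)
    finally show "card R \<le> card (\<Union>x\<in>R. A x - N)" by simp
  qed
  moreover have "X - T \<subset> X" "\<forall>x\<in>X - T. finite (A x - N)" using T(1,2) X(2) by auto
  ultimately obtain f2 where f2: "inj_on f2 (X - T)" "\<forall>x\<in>X - T. f2 x \<in> A x - N"
    using IH[of "X - T" "\<lambda>x. A x - N"] by blast
  have "f1 ` T \<subseteq> N" using f1(2) unfolding N_def by blast
  moreover have "f2 ` (X - T) \<inter> N = {}" using f2(2) by blast
  ultimately have "f1 ` T \<inter> f2 ` (X - T) = {}" by blast
  from inj_on_piecewise[OF f1(1) f2(1) this]
  have "inj_on (\<lambda>x. if x \<in> T then f1 x else f2 x) X" using T(1) by (simp add: Un_absorb1)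
  moreover have "\<forall>x\<in>X. (if x \<in> T then f1 x else f2 x) \<in> A x" using f1(2) f2(2) by simp
  ultimately show ?thesis by (intro exI[of _ "\<lambda>x. if x \<in> T then f1 x else f2 x"] conjI)
qed

lemma hall_step_surplus:
  fixes A :: "'a \<Rightarrow> 'b set"
  assumes IH: "\<And>Y (B :: 'a \<Rightarrow> 'b set). Y \<subset> X \<Longrightarrow> \<forall>y\<in>Y. finite (B y) \<Longrightarrow>
                 \<forall>T\<subseteq>Y. card T \<le> card (\<Union>(B ` T)) \<Longrightarrow> \<exists>f. inj_on f Y \<and> (\<forall>y\<in>Y. f y \<in> B y)"
    and X: "\<forall>x\<in>X. finite (A x)" "\<forall>T\<subseteq>X. card T \<le> card (\<Union>(A ` T))"
    and surplus: "\<forall>T. T \<subset> X \<longrightarrow> T \<noteq> {} \<longrightarrow> card T < card (\<Union>(A ` T))"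
    and x: "x \<in> X"
  shows "\<exists>f. inj_on f X \<and> (\<forall>x\<in>X. f x \<in> A x)"
proof -
  have "card {x} \<le> card (\<Union>(A ` {x}))" using X(2) x by blast
  then obtain y where y: "y \<in> A x" by fastforce
  have "\<forall>T\<subseteq>X - {x}. card T \<le> card (\<Union>z\<in>T. A z - {y})"
  proof (intro allI impI)
    fix T assume T: "T \<subseteq> X - {x}"
    show "card T \<le> card (\<Union>z\<in>T. A z - {y})"
    proof (cases "T = {}")
      case False
      then have "card T < card (\<Union>(A ` T))" using surplus T x by blast
      also have "\<dots> \<le> card (\<Union>(A ` T) - {y}) + 1"
        by (cases "y \<in> \<Union>(A ` T)") (simp_all add: card_Diff_singleton_if)
      also have "\<Union>(A ` T) - {y} = (\<Union>z\<in>T. A z - {y})" by blast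
      finally show ?thesis by simp
    qed simp
  qed
  moreover have "X - {x} \<subset> X" "\<forall>z\<in>X - {x}. finite (A z - {y})" using x X(1) by auto
  ultimately obtain f where f: "inj_on f (X - {x})" "\<forall>z\<in>X - {x}. f z \<in> A z - {y}"
    using IH[of "X - {x}" "\<lambda>z. A z - {y}"] by blast
  have "inj_on (f(x := y)) X" "\<forall>z\<in>X. (f(x := y)) z \<in> A z"
    using f y x by (auto simp: inj_on_def)
  then show ?thesis by blast
qed

(* Halmos-Vaughan induction: either some proper nonempty T is critical, or all of them
   have surplus and one representative can be fixed at once. *)
theorem Hall_marriage:
  fixes A :: "'a \<Rightarrow> 'b set"
  assumes "finite X" "\<forall>x\<in>X. finite (A x)" "\<forall>T\<subseteq>X. card T \<le> card (\<Union>(A ` T))"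
  shows "\<exists>f. inj_on f X \<and> (\<forall>x\<in>X. f x \<in> A x)"
  using assms
proof (induction X arbitrary: A rule: finite_psubset_induct)
  case (psubset X)
  show ?case
  proof (cases "\<exists>T. T \<subset> X \<and> T \<noteq> {} \<and> card (\<Union>(A ` T)) \<le> card T")
    case True
    then obtain T where "T \<subset> X" "T \<noteq> {}" "card (\<Union>(A ` T)) \<le> card T" by blast
    from hall_step_tight[OF psubset.IH psubset.hyps psubset.prems this] show ?thesis .
  next
    case False
    then have surplus: "\<forall>T. T \<subset> X \<longrightarrow> T \<noteq> {} \<longrightarrow> card T < card (\<Union>(A ` T))"
      by (meson not_le)
    show ?thesis
    proof (cases "X = {}")
      case False
      then obtain x where "x \<in> X" by blast
      from hall_step_surplus[OF psubset.IH psubset.prems surplus this] show ?thesis .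
    qed simp
  qed
qed

section \<open>Matchings\<close>

lemma matchingD:
  assumes "matching F M"
  shows "M \<subseteq> F" and "e \<in> M \<Longrightarrow> f \<in> M \<Longrightarrow> e \<noteq> f \<Longrightarrow> e \<inter> f = {}"
  using assms unfolding matching_def by auto

lemma maximal_matchingD: "maximal_matching F M \<Longrightarrow> matching F M"
  unfolding maximal_matching_def by simp

lemma matching_mono: "matching F M \<Longrightarrow> M' \<subseteq> M \<Longrightarrow> M' \<subseteq> F' \<Longrightarrow> matching F' M'"
  unfolding matching_def by blast

lemma matching_insert_iff:
  assumes "matching F M" "e \<in> F" "e \<notin> M"
  shows "matching F (insert e M) \<longleftrightarrow> (\<forall>m\<in>M. m \<inter> e = {})"
  using assms unfolding matching_def by (auto simp: Int_commute)

lemma maximal_matching_iff: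
  "maximal_matching F M \<longleftrightarrow> matching F M \<and> (\<forall>e\<in>F - M. \<exists>m\<in>M. m \<inter> e \<noteq> {})"
  unfolding maximal_matching_def by (auto simp: matching_insert_iff) blast

lemma maximal_matching_if_covers:
  assumes "matching F M" "\<forall>e\<in>F. e \<inter> C \<noteq> {}" "C \<subseteq> \<Union>M"
  shows "maximal_matching F M"
  unfolding maximal_matching_iff
proof (intro conjI ballI)
  fix e assume "e \<in> F - M"
  then obtain c where "c \<in> e" "c \<in> C" using assms(2) by blast
  then obtain m where "m \<in> M" "c \<in> m" using assms(3) by blast
  with \<open>c \<in> e\<close> show "\<exists>m\<in>M. m \<inter> e \<noteq> {}" by blast
qed (rule assms(1))

lemma maximal_matching_subgraph:
  "maximal_matching F M \<Longrightarrow> M \<subseteq> F' \<Longrightarrow> F' \<subseteq> F \<Longrightarrow> maximal_matching F' M"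
  unfolding maximal_matching_iff matching_def by (meson Diff_iff subsetD)

lemma maximal_matching_extend_delete_vertex:
  assumes "maximal_matching (delete_vertex F v) M" "matching F M'" "M \<subseteq> M'"
    and "\<forall>e\<in>F. v \<in> e \<longrightarrow> e \<inter> \<Union>M' \<noteq> {}"
  shows "maximal_matching F M'"
  unfolding maximal_matching_iff
proof (intro conjI ballI)
  fix e assume e: "e \<in> F - M'"
  show "\<exists>m\<in>M'. m \<inter> e \<noteq> {}"
  proof (cases "v \<in> e")
    case True
    then obtain x m where "x \<in> e" "x \<in> m" "m \<in> M'" using assms(4) e by blast
    then show ?thesis by blast
  next
    case False
    then have "e \<in> delete_vertex F v - M" using e assms(3) by (auto simp: delete_vertex_def)
    then obtain m where "m \<in> M" "m \<inter> e \<noteq> {}" using assms(1) unfolding maximal_matching_iff by blast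
    then show ?thesis using assms(3) by blast
  qed
qed (rule assms(2))

lemma exists_maximal_matching_superset:
  assumes "finite F" "matching F M0"
  obtains M where "maximal_matching F M" "M0 \<subseteq> M"
proof -
  let ?P = "\<lambda>M. matching F M \<and> M0 \<subseteq> M"
  have "\<forall>M. ?P M \<longrightarrow> card M < card F + 1"
    using assms(1) unfolding matching_def by (simp add: card_mono less_Suc_eq_le)
  with assms(2) have "\<exists>M. ?P M \<and> (\<forall>M'. ?P M' \<longrightarrow> card M' \<le> card M)"
    by (intro ex_has_greatest_nat[of ?P M0]) auto
  then obtain M where M: "?P M" "\<forall>M'. ?P M' \<longrightarrow> card M' \<le> card M" by blast
  have "finite M" using M(1) assms(1) unfolding matching_def by (meson finite_subset)
  have "maximal_matching F M"
    unfolding maximal_matching_def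
  proof (intro conjI ballI notI)
    fix e assume "e \<in> F - M" "matching F (insert e M)"
    then have "card (insert e M) \<le> card M" using M by blast
    then show False using \<open>finite M\<close> \<open>e \<in> F - M\<close> by simp
  qed (use M in simp)
  then show thesis using that M(1) by blast
qed

lemma matching_of_injection:
  assumes "\<forall>x\<in>X. {x, g x} \<in> F \<and> g x \<notin> X" "inj_on g X"
  shows "matching F ((\<lambda>x. {x, g x}) ` X)" and "card ((\<lambda>x. {x, g x}) ` X) = card X"
proof -
  show "matching F ((\<lambda>x. {x, g x}) ` X)"
    unfolding matching_def
  proof (intro conjI ballI impI)
    fix e f assume "e \<in> (\<lambda>x. {x, g x}) ` X" "f \<in> (\<lambda>x. {x, g x}) ` X" "e \<noteq> f"
    then obtain x y where "x \<in> X" "y \<in> X" "e = {x, g x}" "f = {y, g y}" "x \<noteq> y" by blast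
    moreover have "g x \<noteq> g y" using calculation assms(2) by (meson inj_onD)
    ultimately show "e \<inter> f = {}" using assms(1) by auto
  qed (use assms(1) in blast)
  have "inj_on (\<lambda>x. {x, g x}) X"
    using assms(1) by (auto simp: inj_on_def doubleton_eq_iff)
  then show "card ((\<lambda>x. {x, g x}) ` X) = card X" by (rule card_image)
qed

lemma maximal_matching_delete_edge:
  assumes strong: "strong_vertex (delete_vertex F b) a" and M: "maximal_matching (F - {{a, b}}) M"
  shows "maximal_matching F M"
proof -
  have mM: "matching (F - {{a, b}}) M" by (rule maximal_matchingD[OF M])
  then have MF: "M \<subseteq> F - {{a, b}}" by (rule matchingD(1))
  with mM have "matching F M" using matching_mono[OF _ order_refl] by blast
  moreover have "\<exists>m\<in>M. m \<inter> f \<noteq> {}" if "f \<in> F - M" for f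
  proof (cases "f = {a, b}")
    case True
    show ?thesis
    proof (rule ccontr)
      assume "\<not> (\<exists>m\<in>M. m \<inter> f \<noteq> {})"
      then have "M \<subseteq> delete_vertex F b" "a \<notin> \<Union>M"
        using MF True unfolding delete_vertex_def by blast+
      moreover have "delete_vertex F b \<subseteq> F - {{a, b}}" unfolding delete_vertex_def by blast
      ultimately show False
        using maximal_matching_subgraph[OF M] strong unfolding strong_vertex_def by blast
    qed
  next
    case False
    then show ?thesis using M that unfolding maximal_matching_iff by blast
  qed
  ultimately show ?thesis unfolding maximal_matching_iff by blast
qed

lemma not_equimatchable_if_inner_edge:
  assumes cover: "\<forall>e\<in>F. e \<inter> X \<noteq> {}" and "finite X"
    and g: "\<forall>x\<in>X. {x, g x} \<in> F \<and> g x \<notin> X" "inj_on g X"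
    and yz: "{y, z} \<in> F" "y \<in> X" "z \<in> X" "y \<noteq> z"
  shows "\<not> equimatchable F"
proof -
  define pairs where "pairs Y = (\<lambda>x. {x, g x}) ` Y" for Y
  have pairs_matching: "matching F (pairs Y)" and card_pairs: "card (pairs Y) = card Y" if "Y \<subseteq> X" for Y
    using matching_of_injection[of Y g F] g that unfolding pairs_def by (auto intro: inj_on_subset)
  have "X \<subseteq> \<Union>(pairs X)" unfolding pairs_def by blast
  then have M1: "maximal_matching F (pairs X)"
    using maximal_matching_if_covers[OF pairs_matching cover] by blast
  define M2 where "M2 = insert {y, z} (pairs (X - {y, z}))"
  have "\<forall>m\<in>pairs (X - {y, z}). m \<inter> {y, z} = {}" using g(1) yz(2,3) unfolding pairs_def by auto
  moreover have "{y, z} \<notin> pairs (X - {y, z})" using g(1) yz(2) unfolding pairs_def by blast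
  ultimately have "matching F M2" and "card M2 = card (X - {y, z}) + 1"
    using matching_insert_iff[OF pairs_matching yz(1)] card_pairs \<open>finite X\<close> unfolding M2_def
    by (auto simp: finite_subset pairs_def)
  moreover have "X \<subseteq> \<Union>M2" unfolding M2_def pairs_def by blast
  moreover have "card (X - {y, z}) = card X - 2" "2 \<le> card X"
    using card_Diff_subset[of "{y, z}" X] card_mono[OF \<open>finite X\<close>, of "{y, z}"] yz(2-4) by auto
  ultimately have "maximal_matching F M2" "card M2 < card X"
    using maximal_matching_if_covers[OF _ cover] by auto
  then show ?thesis using M1 card_pairs[of X] unfolding equimatchable_def by (metis less_irrefl order_refl)
qed

lemma nbhd_sym: "x \<in> nbhd E u \<longleftrightarrow> u \<in> nbhd E x"
  unfolding nbhd_def by (simp add: insert_commute)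

lemma nbhd_set_Un: "nbhd_set E (A \<union> B) = nbhd_set E A \<union> nbhd_set E B"
  unfolding nbhd_set_def by simp

lemma nbhd_set_mono: "A \<subseteq> B \<Longrightarrow> nbhd_set E A \<subseteq> nbhd_set E B"
  unfolding nbhd_set_def by blast

lemma mem_nbhd_set_if_subset_nbhd: "S \<subseteq> nbhd E u \<Longrightarrow> S \<noteq> {} \<Longrightarrow> u \<in> nbhd_set E S"
  unfolding nbhd_set_def using nbhd_sym by fastforce

lemma nbhd_delete_vertex: "x \<noteq> w \<Longrightarrow> nbhd (delete_vertex E w) x = nbhd E x - {w}"
  unfolding nbhd_def delete_vertex_def by auto

lemma connected_graph_edge_leaving:
  assumes "connected_graph V E" "x \<in> V" "x \<in> X" "y \<in> V" "y \<notin> X"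
  obtains a b where "{a, b} \<in> E" "a \<in> X" "b \<notin> X"
proof -
  have "(x, y) \<in> {(a, b). {a, b} \<in> E}\<^sup>*" using assms(1,2,4) unfolding connected_graph_def by blast
  then have "\<exists>a b. {a, b} \<in> E \<and> a \<in> X \<and> b \<notin> X" using assms(3,5)
    by (induction rule: rtrancl_induct) blast+
  then show thesis using that by blast
qed

definition deficiency :: "'a set set \<Rightarrow> 'a set \<Rightarrow> int" where
  "deficiency E S = int (card S) - int (card (nbhd_set E S))"

section \<open>Finite bipartite graphs\<close>

locale bipartite_graph =
  fixes U W :: "'a set" and E :: "'a set set"
  assumes finite_sides: "finite U" "finite W"
    and disjoint_sides: "U \<inter> W = {}"
    and edge_between: "e \<in> E \<Longrightarrow> \<exists>u\<in>U. \<exists>w\<in>W. e = {u, w}"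
begin

lemma finite_edges: "finite E"
proof -
  have "E \<subseteq> (\<lambda>(u, w). {u, w}) ` (U \<times> W)" using edge_between by fastforce
  then show ?thesis using finite_sides by (meson finite_SigmaI finite_imageI finite_subset)
qed

lemma edge_at_U: "e \<in> E \<Longrightarrow> u \<in> U \<Longrightarrow> u \<in> e \<Longrightarrow> \<exists>w\<in>W. e = {u, w}"
  using edge_between disjoint_sides by blast

lemma edge_at_W: "e \<in> E \<Longrightarrow> w \<in> W \<Longrightarrow> w \<in> e \<Longrightarrow> \<exists>u\<in>U. e = {u, w}"
  using edge_between disjoint_sides by blast

lemma nbhd_U: "u \<in> U \<Longrightarrow> nbhd E u \<subseteq> W"
  unfolding nbhd_def using edge_at_U by (fastforce simp: doubleton_eq_iff)

lemma nbhd_W: "w \<in> W \<Longrightarrow> nbhd E w \<subseteq> U"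
  unfolding nbhd_def using edge_at_W by (fastforce simp: doubleton_eq_iff)

lemma finite_nbhd_set: "finite (nbhd_set E S)"
proof -
  have "nbhd_set E S \<subseteq> \<Union>E" unfolding nbhd_set_def nbhd_def by blast
  also have "\<dots> \<subseteq> U \<union> W" using edge_between by blast
  finally show ?thesis using finite_sides finite_subset by blast
qed

lemma finite_nbhd: "finite (nbhd E x)"
  using finite_nbhd_set[of "{x}"] by (simp add: nbhd_set_def)

lemma bipartite_graph_delete_vertex: "bipartite_graph U W (delete_vertex E v)"
  using finite_sides disjoint_sides edge_between
  by unfold_locales (auto simp: delete_vertex_def)

lemma card_matching: "matching E M \<Longrightarrow> card M = card (U \<inter> \<Union>M)"
proof -
  assume M: "matching E M"
  then have "finite M" using finite_edges unfolding matching_def by (blast intro: finite_subset)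
  have one: "card (U \<inter> m) = 1" if "m \<in> M" for m
  proof -
    have "m \<in> E" using M that unfolding matching_def by blast
    then obtain u w where "u \<in> U" "w \<in> W" "m = {u, w}" using edge_between by blast
    then have "U \<inter> m = {u}" using disjoint_sides by blast
    then show ?thesis by simp
  qed
  have "U \<inter> \<Union>M = (\<Union>m\<in>M. U \<inter> m)" by blast
  also have "card \<dots> = (\<Sum>m\<in>M. card (U \<inter> m))"
    using M \<open>finite M\<close> finite_sides unfolding matching_def
    by (intro card_UN_disjoint) auto
  also have "\<dots> = card M" using one by simp
  finally show ?thesis by simp
qed

lemma saturates_U_iff_card: "matching E M \<Longrightarrow> U \<subseteq> \<Union>M \<longleftrightarrow> card M = card U"
proof -
  assume "matching E M"
  then have "card M = card (U \<inter> \<Union>M)" by (rule card_matching)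
  moreover have "U \<inter> \<Union>M = U \<longleftrightarrow> card (U \<inter> \<Union>M) = card U"
    using finite_sides(1) card_subset_eq[of U "U \<inter> \<Union>M"] by auto
  moreover have "U \<subseteq> \<Union>M \<longleftrightarrow> U \<inter> \<Union>M = U" by blast
  ultimately show ?thesis by simp
qed

lemma card_maximal_matching_if_strong:
  assumes "\<forall>u\<in>U. strong_vertex E u" "maximal_matching E M"
  shows "card M = card U"
proof -
  have "U \<subseteq> \<Union>M" using assms unfolding strong_vertex_def by blast
  moreover have "matching E M" using assms(2) unfolding maximal_matching_def by blast
  ultimately show ?thesis using saturates_U_iff_card by blast
qed

lemma card_le_nbhd_set_if_unsaturated:
  assumes M: "maximal_matching E M" and u: "u \<in> U" "u \<notin> \<Union>M" and T: "T \<subseteq> nbhd E u"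
  shows "card T \<le> card (nbhd_set E T - {u})"
proof -
  have ME: "M \<subseteq> E" and disj: "\<And>e f. e \<in> M \<Longrightarrow> f \<in> M \<Longrightarrow> e \<noteq> f \<Longrightarrow> e \<inter> f = {}"
    using M unfolding maximal_matching_def matching_def by auto
  have TW: "T \<subseteq> W" using T nbhd_U[OF u(1)] by blast
  have "\<exists>p. p \<in> U \<and> {p, t} \<in> M" if "t \<in> T" for t
  proof -
    have "{u, t} \<in> E - M" using T that u(2) unfolding nbhd_def by blast
    then obtain m where m: "m \<in> M" "m \<inter> {u, t} \<noteq> {}" using M unfolding maximal_matching_iff by blast
    then have "t \<in> m" using u(2) by blast
    moreover have "m \<in> E" "t \<in> W" using ME TW that m(1) by auto
    ultimately obtain p where "p \<in> U" "m = {p, t}" using edge_at_W by blast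
    then show ?thesis using m(1) by blast
  qed
  then obtain g where g: "\<And>t. t \<in> T \<Longrightarrow> g t \<in> U \<and> {g t, t} \<in> M" by metis
  have "inj_on g T"
  proof (rule inj_onI)
    fix t t' assume tt: "t \<in> T" "t' \<in> T" "g t = g t'"
    then have "{g t, t} = {g t', t'}" using g[OF tt(1)] g[OF tt(2)] disj by blast
    then show "t = t'" using g TW disjoint_sides tt by (auto simp: doubleton_eq_iff)
  qed
  moreover have "g ` T \<subseteq> nbhd_set E T - {u}"
  proof
    fix x assume "x \<in> g ` T"
    then obtain t where "t \<in> T" "x = g t" by blast
    then have tx: "{t, x} \<in> M" using g by (simp add: insert_commute)
    then have "x \<noteq> u" using u(2) by blast
    from tx ME have "x \<in> nbhd E t" unfolding nbhd_def by blast
    with \<open>t \<in> T\<close> \<open>x \<noteq> u\<close> show "x \<in> nbhd_set E T - {u}" unfolding nbhd_set_def by blast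
  qed
  ultimately show ?thesis by (rule card_inj_on_le) (simp add: finite_nbhd_set)
qed

lemma maximal_matching_if_covers_deleted_nbhd:
  assumes M: "maximal_matching (delete_vertex E u) M" and u: "u \<in> U" and N: "nbhd E u \<subseteq> \<Union>M"
  shows "maximal_matching E M"
proof -
  have mD: "matching (delete_vertex E u) M" by (rule maximal_matchingD[OF M])
  then have "M \<subseteq> E" using matchingD(1) unfolding delete_vertex_def by blast
  with mD have "matching E M" using matching_mono[OF _ order_refl] by blast
  moreover have "\<forall>e\<in>E. u \<in> e \<longrightarrow> e \<inter> \<Union>M \<noteq> {}"
  proof (intro ballI impI)
    fix e assume "e \<in> E" "u \<in> e"
    then obtain b where "e = {u, b}" using edge_at_U u by blast
    then have "b \<in> \<Union>M" using \<open>e \<in> E\<close> N unfolding nbhd_def by blast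
    then show "e \<inter> \<Union>M \<noteq> {}" using \<open>e = {u, b}\<close> by blast
  qed
  ultimately show ?thesis using maximal_matching_extend_delete_vertex[OF M] by blast
qed

lemma exists_maximal_matching_avoiding:
  assumes u: "u \<in> U"
    and surplus: "\<forall>S. S \<noteq> {} \<longrightarrow> S \<subseteq> nbhd E u \<longrightarrow> card S < card (nbhd_set E S)"
  obtains M where "maximal_matching E M" "u \<notin> \<Union>M"
proof -
  define X where "X = nbhd E u"
  have XW: "X \<subseteq> W" using nbhd_U[OF u] unfolding X_def .
  have hall: "\<forall>T\<subseteq>X. card T \<le> card (\<Union>x\<in>T. nbhd E x - {u})"
  proof (intro allI impI)
    fix T assume T: "T \<subseteq> X"
    show "card T \<le> card (\<Union>x\<in>T. nbhd E x - {u})"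
    proof (cases "T = {}")
      case False
      then have "u \<in> nbhd_set E T" using T mem_nbhd_set_if_subset_nbhd[of T E u] unfolding X_def by blast
      then have "card (nbhd_set E T - {u}) = card (nbhd_set E T) - 1" by simp
      moreover have "card T < card (nbhd_set E T)"
        using surplus[rule_format, of T] T False unfolding X_def by blast
      moreover have "nbhd_set E T - {u} = (\<Union>x\<in>T. nbhd E x - {u})" unfolding nbhd_set_def by auto
      ultimately show ?thesis by simp
    qed simp
  qed
  have "finite X" "\<forall>x\<in>X. finite (nbhd E x - {u})" using finite_nbhd unfolding X_def by auto
  from Hall_marriage[OF this hall]
  obtain g where g: "inj_on g X" "\<forall>x\<in>X. g x \<in> nbhd E x - {u}" by blast
  have "{x, g x} \<in> delete_vertex E u \<and> g x \<notin> X" if "x \<in> X" for x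
  proof -
    have "g x \<in> U" "g x \<noteq> u" "{x, g x} \<in> E" using g(2) nbhd_W XW that unfolding nbhd_def by auto
    moreover have "x \<noteq> u" using XW u disjoint_sides that by blast
    ultimately show ?thesis using XW disjoint_sides unfolding delete_vertex_def by auto
  qed
  with g(1) have "matching (delete_vertex E u) ((\<lambda>x. {x, g x}) ` X)"
    by (intro matching_of_injection(1)) auto
  moreover have "finite (delete_vertex E u)" using finite_edges by (simp add: delete_vertex_def)
  ultimately obtain M where M: "maximal_matching (delete_vertex E u) M" "(\<lambda>x. {x, g x}) ` X \<subseteq> M"
    using exists_maximal_matching_superset by metis
  have "nbhd E u \<subseteq> \<Union>M" using M(2) unfolding X_def by blast
  then have "maximal_matching E M" by (rule maximal_matching_if_covers_deleted_nbhd[OF M(1) u])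
  moreover have "u \<notin> \<Union>M"
    using matchingD(1)[OF maximal_matchingD[OF M(1)]] unfolding delete_vertex_def by blast
  ultimately show thesis using that by blast
qed

lemma strong_vertex_iff_tight_subset:
  assumes "u \<in> U"
  shows "strong_vertex E u \<longleftrightarrow> (\<exists>S. S \<noteq> {} \<and> S \<subseteq> nbhd E u \<and> card (nbhd_set E S) \<le> card S)"
proof
  assume strong: "strong_vertex E u"
  show "\<exists>S. S \<noteq> {} \<and> S \<subseteq> nbhd E u \<and> card (nbhd_set E S) \<le> card S"
  proof (rule ccontr)
    assume "\<nexists>S. S \<noteq> {} \<and> S \<subseteq> nbhd E u \<and> card (nbhd_set E S) \<le> card S"
    then have "\<forall>S. S \<noteq> {} \<longrightarrow> S \<subseteq> nbhd E u \<longrightarrow> card S < card (nbhd_set E S)" by (simp add: not_le) blast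
    then obtain M where "maximal_matching E M" "u \<notin> \<Union>M"
      by (rule exists_maximal_matching_avoiding[OF assms])
    with strong show False unfolding strong_vertex_def by blast
  qed
next
  assume "\<exists>S. S \<noteq> {} \<and> S \<subseteq> nbhd E u \<and> card (nbhd_set E S) \<le> card S"
  then obtain S where S: "S \<noteq> {}" "S \<subseteq> nbhd E u" "card (nbhd_set E S) \<le> card S" by blast
  have "u \<in> nbhd_set E S" using S mem_nbhd_set_if_subset_nbhd[of S E u] by blast
  then have "card (nbhd_set E S - {u}) < card S"
    using S(3) card_Diff1_less[OF finite_nbhd_set, of u S] by linarith
  show "strong_vertex E u"
    unfolding strong_vertex_def
  proof (intro allI impI)
    fix M assume "maximal_matching E M"
    then show "u \<in> \<Union>M"
      using card_le_nbhd_set_if_unsaturated[OF _ assms _ S(2)] \<open>card (nbhd_set E S - {u}) < card S\<close>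
      by (meson not_le)
  qed
qed

lemma nbhd_set_delete_vertex:
  assumes "w \<in> W" "S \<subseteq> W - {w}"
  shows "nbhd_set (delete_vertex E w) S = nbhd_set E S"
proof -
  have "nbhd (delete_vertex E w) t = nbhd E t" if "t \<in> S" for t
  proof -
    have "w \<notin> nbhd E t" using nbhd_W[of t] assms that disjoint_sides by blast
    then show ?thesis using nbhd_delete_vertex[of t w E] assms(2) that by blast
  qed
  then show ?thesis unfolding nbhd_set_def by simp
qed

lemma strong_vertex_delete_vertex_iff:
  assumes u: "u \<in> U" and w: "w \<in> nbhd E u"
  shows "strong_vertex (delete_vertex E w) u \<longleftrightarrow>
    (\<exists>S. S \<noteq> {} \<and> S \<subseteq> nbhd E u - {w} \<and> card (nbhd_set E S) \<le> card S)"
proof -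
  interpret G: bipartite_graph U W "delete_vertex E w" by (rule bipartite_graph_delete_vertex)
  have "w \<in> W" using w nbhd_U[OF u] by blast
  then have "nbhd (delete_vertex E w) u = nbhd E u - {w}"
    using u disjoint_sides nbhd_delete_vertex[of u w E] by blast
  moreover have "nbhd_set (delete_vertex E w) S = nbhd_set E S" if "S \<subseteq> nbhd E u - {w}" for S
    using nbhd_set_delete_vertex[OF \<open>w \<in> W\<close>] nbhd_U[OF u] that by blast
  ultimately show ?thesis using G.strong_vertex_iff_tight_subset[OF u] by (metis (no_types, lifting))
qed

lemma card_nbhd_set_union_of_tight_subsets:
  assumes A: "A \<noteq> {}" "A \<subseteq> nbhd E u" "card (nbhd_set E A) \<le> card A"
    and B: "B \<noteq> {}" "B \<subseteq> nbhd E u" "card (nbhd_set E B) \<le> card B"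
    and meet: "A \<inter> B \<noteq> {} \<Longrightarrow> card (A \<inter> B) < card (nbhd_set E (A \<inter> B))"
  shows "card (nbhd_set E (A \<union> B)) \<le> card (A \<union> B) - 1"
proof -
  have fin: "finite A" "finite B" using A(2) B(2) finite_nbhd finite_subset by blast+
  define k where "k = card (nbhd_set E A \<inter> nbhd_set E B)"
  have "card (A \<inter> B) < k"
  proof (cases "A \<inter> B = {}")
    case True
    have "u \<in> nbhd_set E A \<inter> nbhd_set E B"
      using A B mem_nbhd_set_if_subset_nbhd[of _ E u] by blast
    then have "nbhd_set E A \<inter> nbhd_set E B \<noteq> {}" by blast
    then show ?thesis using True finite_nbhd_set unfolding k_def by (simp add: card_gt_0_iff)
  next
    case False
    then have "card (A \<inter> B) < card (nbhd_set E (A \<inter> B))" by (rule meet)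
    also have "\<dots> \<le> k" unfolding k_def
      using nbhd_set_mono[of "A \<inter> B"] finite_nbhd_set by (intro card_mono) auto
    finally show ?thesis .
  qed
  moreover have "card (nbhd_set E (A \<union> B)) + k = card (nbhd_set E A) + card (nbhd_set E B)"
    unfolding k_def nbhd_set_Un using card_Un_Int[OF finite_nbhd_set finite_nbhd_set] by simp
  moreover have "card (A \<union> B) + card (A \<inter> B) = card A + card B"
    using card_Un_Int[OF fin] by simp
  ultimately show ?thesis using A(3) B(3) by linarith
qed

lemma deficient_subset_if_square_strong:
  assumes u: "u \<in> U" and "square_strong E u"
  shows "\<exists>S. S \<noteq> {} \<and> S \<subseteq> nbhd E u \<and> card (nbhd_set E S) \<le> card S - 1"
proof -
  from \<open>square_strong E u\<close> have strong: "strong_vertex E u"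
    and strong_del: "\<forall>w\<in>nbhd E u. strong_vertex (delete_vertex E w) u"
    unfolding square_strong_def by auto
  define P where "P S \<longleftrightarrow> S \<noteq> {} \<and> S \<subseteq> nbhd E u \<and> card (nbhd_set E S) \<le> card S" for S
  obtain S0 where "P S0" using strong strong_vertex_iff_tight_subset[OF u] unfolding P_def by blast
  then obtain A where A: "P A" and A_min: "\<And>S. P S \<Longrightarrow> card A \<le> card S"
    using ex_has_least_nat[of P S0 card] by auto
  have A': "A \<noteq> {}" "A \<subseteq> nbhd E u" "card (nbhd_set E A) \<le> card A" using A unfolding P_def by auto
  then obtain w where w: "w \<in> A" "w \<in> nbhd E u" by blast
  then have "strong_vertex (delete_vertex E w) u" using strong_del by blast
  then obtain B where B: "B \<noteq> {}" "B \<subseteq> nbhd E u - {w}" "card (nbhd_set E B) \<le> card B"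
    using strong_vertex_delete_vertex_iff[OF u w(2)] by blast
  have B': "B \<subseteq> nbhd E u" using B(2) by blast
  have "card (A \<inter> B) < card (nbhd_set E (A \<inter> B))" if "A \<inter> B \<noteq> {}"
  proof -
    have "finite A" using A'(2) finite_nbhd finite_subset by blast
    then have "card (A \<inter> B) < card A" using w(1) B(2) by (intro psubset_card_mono) blast+
    then have "\<not> P (A \<inter> B)" using A_min by (meson not_le)
    moreover have "A \<inter> B \<subseteq> nbhd E u" using A'(2) by blast
    ultimately show ?thesis using that unfolding P_def by (simp add: not_le)
  qed
  from card_nbhd_set_union_of_tight_subsets[OF A' B(1) B' B(3) this]
  have "card (nbhd_set E (A \<union> B)) \<le> card (A \<union> B) - 1" .
  moreover have "A \<union> B \<noteq> {}" using A'(1) by blast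
  moreover have "A \<union> B \<subseteq> nbhd E u" using A'(2) B' by blast
  ultimately show ?thesis by (intro exI[of _ "A \<union> B"] conjI)
qed

lemma square_strong_if_deficient_subset:
  assumes u: "u \<in> U"
    and S: "S \<noteq> {}" "S \<subseteq> nbhd E u" "card (nbhd_set E S) \<le> card S - 1"
  shows "square_strong E u"
proof -
  have "u \<in> nbhd_set E S" using S mem_nbhd_set_if_subset_nbhd[of S E u] by blast
  then have "card (nbhd_set E S) > 0" by (auto simp: card_gt_0_iff finite_nbhd_set)
  then have two: "card S \<ge> 2" using S(3) by linarith
  have "strong_vertex E u"
    unfolding strong_vertex_iff_tight_subset[OF u]
    using S by (intro exI[of _ S] conjI) auto
  moreover have "strong_vertex (delete_vertex E w) u" if "w \<in> nbhd E u" for w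
  proof -
    have "finite S" using S(2) finite_nbhd finite_subset by blast
    then have "card (S - {w}) \<ge> card S - 1" by (simp add: card_Diff_singleton_if)
    moreover have "card (nbhd_set E (S - {w})) \<le> card (nbhd_set E S)"
      using nbhd_set_mono[of "S - {w}" S E] finite_nbhd_set by (intro card_mono) auto
    ultimately have "card (nbhd_set E (S - {w})) \<le> card (S - {w})" using S(3) by linarith
    moreover have "card (S - {w}) \<ge> 1" using two \<open>card (S - {w}) \<ge> card S - 1\<close> by linarith
    then have "S - {w} \<noteq> {}" by (metis card.empty not_one_le_zero)
    ultimately show ?thesis
      unfolding strong_vertex_delete_vertex_iff[OF u that]
      using S(2) by (intro exI[of _ "S - {w}"] conjI) auto
  qed
  ultimately show ?thesis unfolding square_strong_def by blast
qed

lemma square_strong_iff_deficient_subset: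
  assumes "u \<in> U"
  shows "square_strong E u \<longleftrightarrow>
    (\<exists>S. S \<noteq> {} \<and> S \<subseteq> nbhd E u \<and> card (nbhd_set E S) \<le> card S - 1)"
  using deficient_subset_if_square_strong[OF assms] square_strong_if_deficient_subset[OF assms]
  by blast

lemma edge_stable_if_square_strong:
  assumes "\<forall>u\<in>U. square_strong E u"
  shows "edge_stable_equimatchable E"
proof -
  have strong: "\<forall>u\<in>U. strong_vertex E u" using assms unfolding square_strong_def by blast
  then have "card M = card U" if "maximal_matching E M" for M
    using card_maximal_matching_if_strong that by blast
  moreover have "maximal_matching E M" if "e \<in> E" "maximal_matching (E - {e}) M" for e M
  proof -
    obtain a b where ab: "a \<in> U" "e = {a, b}" using edge_between \<open>e \<in> E\<close> by blast
    then have "b \<in> nbhd E a" using \<open>e \<in> E\<close> unfolding nbhd_def by simp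
    then have "strong_vertex (delete_vertex E b) a" using assms ab(1) unfolding square_strong_def by blast
    from maximal_matching_delete_edge[OF this] show ?thesis using that(2) ab(2) by simp
  qed
  ultimately show ?thesis unfolding edge_stable_equimatchable_def equimatchable_def by metis
qed

lemma max_deficiency_hall_inside:
  assumes S: "S \<subseteq> U" and max: "\<forall>S'\<subseteq>U. deficiency E S' \<le> deficiency E S"
  obtains f where "inj_on f (nbhd_set E S)" "\<forall>x\<in>nbhd_set E S. f x \<in> nbhd E x \<inter> S"
proof -
  have hall: "\<forall>T\<subseteq>nbhd_set E S. card T \<le> card (\<Union>x\<in>T. nbhd E x \<inter> S)"
  proof (intro allI impI)
    fix T assume T: "T \<subseteq> nbhd_set E S"
    define S' where "S' = S - nbhd_set E T"
    have "nbhd_set E S' \<subseteq> nbhd_set E S - T"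
      unfolding S'_def nbhd_set_def using nbhd_sym by fastforce
    then have "card (nbhd_set E S') \<le> card (nbhd_set E S - T)"
      using finite_nbhd_set by (intro card_mono) auto
    also have "\<dots> = card (nbhd_set E S) - card T"
      using card_Diff_subset[OF finite_subset[OF T finite_nbhd_set] T] .
    finally have "card (nbhd_set E S') \<le> card (nbhd_set E S) - card T" .
    moreover have "card S' = card S - card (S \<inter> nbhd_set E T)"
      unfolding S'_def using card_Diff_subset_Int[of S "nbhd_set E T"] finite_nbhd_set by simp
    moreover have "card (S \<inter> nbhd_set E T) \<le> card S"
      using finite_subset[OF S finite_sides(1)] by (intro card_mono) auto
    moreover have "card T \<le> card (nbhd_set E S)" using finite_nbhd_set T by (intro card_mono)
    moreover have "S' \<subseteq> U" using S unfolding S'_def by blast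
    then have "deficiency E S' \<le> deficiency E S" using max by blast
    ultimately have "card T \<le> card (S \<inter> nbhd_set E T)" unfolding deficiency_def by linarith
    also have "S \<inter> nbhd_set E T = (\<Union>x\<in>T. nbhd E x \<inter> S)"
      unfolding nbhd_set_def by auto
    finally show "card T \<le> card (\<Union>x\<in>T. nbhd E x \<inter> S)" .
  qed
  have "\<forall>x\<in>nbhd_set E S. finite (nbhd E x \<inter> S)" using finite_nbhd by blast
  from Hall_marriage[OF finite_nbhd_set this hall] that show thesis by blast
qed

lemma max_deficiency_hall_outside:
  assumes S: "S \<subseteq> U" and max: "\<forall>S'\<subseteq>U. deficiency E S' \<le> deficiency E S"
  obtains f where "inj_on f (U - S)" "\<forall>x\<in>U - S. f x \<in> nbhd E x - nbhd_set E S"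
proof -
  have hall: "\<forall>R\<subseteq>U - S. card R \<le> card (\<Union>x\<in>R. nbhd E x - nbhd_set E S)"
  proof (intro allI impI)
    fix R assume R: "R \<subseteq> U - S"
    have fin: "finite S" "finite R" using S R finite_sides(1) finite_subset by blast+
    have "card (nbhd_set E (S \<union> R)) = card (nbhd_set E S \<union> (nbhd_set E R - nbhd_set E S))"
      by (simp add: nbhd_set_Un)
    also have "\<dots> = card (nbhd_set E S) + card (nbhd_set E R - nbhd_set E S)"
      using finite_nbhd_set by (intro card_Un_disjoint) auto
    finally have "card (nbhd_set E (S \<union> R)) = card (nbhd_set E S) + card (nbhd_set E R - nbhd_set E S)" .
    moreover have "card (S \<union> R) = card S + card R" using R fin by (intro card_Un_disjoint) auto
    moreover have "S \<union> R \<subseteq> U" using S R by blast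
    then have "deficiency E (S \<union> R) \<le> deficiency E S" using max by blast
    ultimately have "card R \<le> card (nbhd_set E R - nbhd_set E S)" unfolding deficiency_def by linarith
    also have "nbhd_set E R - nbhd_set E S = (\<Union>x\<in>R. nbhd E x - nbhd_set E S)"
      unfolding nbhd_set_def by auto
    finally show "card R \<le> card (\<Union>x\<in>R. nbhd E x - nbhd_set E S)" .
  qed
  have "finite (U - S)" "\<forall>x\<in>U - S. finite (nbhd E x - nbhd_set E S)"
    using finite_sides(1) finite_nbhd by auto
  from Hall_marriage[OF this hall] that show thesis by blast
qed

lemma max_deficiency_injection:
  assumes S: "S \<subseteq> U" and max: "\<forall>S'\<subseteq>U. deficiency E S' \<le> deficiency E S"
  defines "X \<equiv> nbhd_set E S \<union> (U - S)"
  obtains g where "inj_on g X" "\<forall>x\<in>X. {x, g x} \<in> E \<and> g x \<notin> X"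
proof -
  obtain f1 where f1: "inj_on f1 (nbhd_set E S)" "\<forall>x\<in>nbhd_set E S. f1 x \<in> nbhd E x \<inter> S"
    using max_deficiency_hall_inside[OF S max] by blast
  obtain f2 where f2: "inj_on f2 (U - S)" "\<forall>x\<in>U - S. f2 x \<in> nbhd E x - nbhd_set E S"
    using max_deficiency_hall_outside[OF S max] by blast
  have NW: "nbhd_set E S \<subseteq> W" using S nbhd_U by (auto simp: nbhd_set_def)
  have f2W: "f2 x \<in> W" if "x \<in> U - S" for x using f2(2) nbhd_U that by blast
  define g where "g x = (if x \<in> nbhd_set E S then f1 x else f2 x)" for x
  have "f1 ` nbhd_set E S \<subseteq> U" using f1(2) S by blast
  moreover have "f2 ` (U - S) \<subseteq> W" using f2W by blast
  ultimately have "f1 ` nbhd_set E S \<inter> f2 ` (U - S) = {}" using disjoint_sides by blast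
  from inj_on_piecewise[OF f1(1) f2(1) this] have "inj_on g X" unfolding g_def X_def .
  moreover have "{x, g x} \<in> E \<and> g x \<notin> X" if "x \<in> X" for x
  proof (cases "x \<in> nbhd_set E S")
    case True
    then have "g x \<in> nbhd E x" "g x \<in> S" using f1(2) by (simp_all add: g_def)
    then show ?thesis using S NW disjoint_sides unfolding X_def nbhd_def by auto
  next
    case False
    then have x: "x \<in> U - S" using that unfolding X_def by simp
    then have "g x \<in> nbhd E x" "g x \<notin> nbhd_set E S" "g x \<in> W"
      using False f2(2) f2W by (simp_all add: g_def)
    then show ?thesis using disjoint_sides unfolding X_def nbhd_def by auto
  qed
  ultimately show thesis using that by blast
qed

lemma exists_max_deficiency:
  obtains S where "S \<subseteq> U" "\<forall>S'\<subseteq>U. deficiency E S' \<le> deficiency E S"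
proof -
  have "finite (deficiency E ` Pow U)" "deficiency E ` Pow U \<noteq> {}" using finite_sides(1) by auto
  then have "Max (deficiency E ` Pow U) \<in> deficiency E ` Pow U" by (rule Max_in)
  then obtain S where "S \<subseteq> U" "deficiency E S = Max (deficiency E ` Pow U)" by auto
  moreover have "deficiency E S' \<le> Max (deficiency E ` Pow U)" if "S' \<subseteq> U" for S'
    using \<open>finite (deficiency E ` Pow U)\<close> that by (simp add: Max_ge)
  ultimately show thesis using that by metis
qed

(* A set S0 of maximum deficiency pairs off the vertex cover N(S0) + (U - S0) injectively;
   connectivity provides an edge between N(S0) and U - S0, which can be exchanged into that
   matching to give a smaller maximal matching. *)
lemma hall_condition_if_equimatchable:
  assumes conn: "connected_graph (U \<union> W) E" and UW: "card U < card W" and eq: "equimatchable E"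
    and S: "S \<subseteq> U"
  shows "card S \<le> card (nbhd_set E S)"
proof (rule ccontr)
  assume "\<not> card S \<le> card (nbhd_set E S)"
  then have "deficiency E S > 0" unfolding deficiency_def by simp
  obtain S0 where S0: "S0 \<subseteq> U" and max: "\<forall>S'\<subseteq>U. deficiency E S' \<le> deficiency E S0"
    by (rule exists_max_deficiency)
  define N where "N = nbhd_set E S0"
  have NW: "N \<subseteq> W" using S0 nbhd_U by (auto simp: N_def nbhd_set_def)
  have "deficiency E S \<le> deficiency E S0" using max S by blast
  with \<open>deficiency E S > 0\<close> have "card N < card S0" unfolding deficiency_def N_def by simp
  then obtain s where s: "s \<in> S0" by (metis card.empty all_not_in_conv not_less0)
  have "card S0 \<le> card U" using S0 finite_sides(1) by (simp add: card_mono)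
  then have "\<not> W \<subseteq> N" using \<open>card N < card S0\<close> UW card_mono[OF finite_nbhd_set, of W S0]
    unfolding N_def by linarith
  then obtain w0 where w0: "w0 \<in> W" "w0 \<notin> S0 \<union> N" using S0 disjoint_sides by auto
  obtain y z where yz: "{y, z} \<in> E" "y \<in> S0 \<union> N" "z \<notin> S0 \<union> N"
    using connected_graph_edge_leaving[OF conn _ _ _ w0(2)] s S0 w0(1) by blast
  have "y \<in> N"
  proof (rule ccontr)
    assume "y \<notin> N"
    then have "y \<in> S0" using yz(2) by simp
    then have "z \<in> N" using yz(1) unfolding N_def nbhd_set_def nbhd_def by blast
    then show False using yz(3) by simp
  qed
  then have "y \<in> W" "z \<in> U" using NW nbhd_W yz(1) unfolding nbhd_def by auto
  define X where "X = N \<union> (U - S0)"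
  obtain g where g: "inj_on g X" "\<forall>x\<in>X. {x, g x} \<in> E \<and> g x \<notin> X"
    using max_deficiency_injection[OF S0 max] unfolding X_def N_def by blast
  have "\<forall>e\<in>E. e \<inter> X \<noteq> {}"
  proof
    fix e assume "e \<in> E"
    then obtain p q where "p \<in> U" "q \<in> W" "e = {p, q}" using edge_between by blast
    then show "e \<inter> X \<noteq> {}"
      using \<open>e \<in> E\<close> unfolding X_def N_def nbhd_set_def nbhd_def by (cases "p \<in> S0") auto
  qed
  moreover have "finite X" using finite_nbhd_set finite_sides(1) unfolding X_def N_def by simp
  moreover have "y \<in> X" "z \<in> X" "y \<noteq> z"
    using \<open>y \<in> N\<close> \<open>y \<in> W\<close> \<open>z \<in> U\<close> yz(3) disjoint_sides unfolding X_def by auto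
  ultimately show False using not_equimatchable_if_inner_edge[OF _ _ g(2,1) yz(1)] eq by blast
qed

lemma strong_if_hall_condition:
  assumes eq: "equimatchable E" and hall: "\<forall>S\<subseteq>U. card S \<le> card (nbhd_set E S)"
  shows "\<forall>u\<in>U. strong_vertex E u"
proof -
  have "\<forall>x\<in>U. finite (nbhd E x)" using finite_nbhd by blast
  from Hall_marriage[OF finite_sides(1) this] hall
  obtain f where f: "inj_on f U" "\<forall>x\<in>U. f x \<in> nbhd E x" unfolding nbhd_set_def by blast
  have "\<forall>x\<in>U. {x, f x} \<in> E \<and> f x \<notin> U"
    using f(2) nbhd_U disjoint_sides unfolding nbhd_def by blast
  with f(1) have M: "matching E ((\<lambda>x. {x, f x}) ` U)" "card ((\<lambda>x. {x, f x}) ` U) = card U"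
    by (auto intro: matching_of_injection)
  have "\<forall>e\<in>E. e \<inter> U \<noteq> {}" using edge_between by blast
  moreover have "U \<subseteq> \<Union>((\<lambda>x. {x, f x}) ` U)" by blast
  ultimately have "maximal_matching E ((\<lambda>x. {x, f x}) ` U)"
    using maximal_matching_if_covers[OF M(1)] by blast
  then have "card M = card U" if "maximal_matching E M" for M
    using eq that M(2) unfolding equimatchable_def by metis
  then have "U \<subseteq> \<Union>M" if "maximal_matching E M" for M
    using saturates_U_iff_card that unfolding maximal_matching_def by blast
  then show ?thesis unfolding strong_vertex_def by blast
qed

(* If N(u) = {w}, strength of u forces N(w) = {u}, so {u, w} would be a component. *)
lemma nbhd_not_singleton_if_strong:
  assumes conn: "connected_graph (U \<union> W) E" and UW: "card U < card W"
    and u: "u \<in> U" "strong_vertex E u" and w: "w \<in> nbhd E u"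
  shows "\<exists>w'\<in>nbhd E u. w' \<noteq> w"
proof (rule ccontr)
  assume "\<not> (\<exists>w'\<in>nbhd E u. w' \<noteq> w)"
  then have Nu: "nbhd E u = {w}" using w by blast
  have "w \<in> W" using w nbhd_U[OF u(1)] by blast
  have Nw: "nbhd E w \<subseteq> {u}"
  proof
    fix x assume x: "x \<in> nbhd E w"
    show "x \<in> {u}"
    proof (rule ccontr)
      assume "x \<notin> {u}"
      have "{x, w} \<in> E" using x by (simp add: nbhd_def insert_commute)
      then have "matching E {{x, w}}" unfolding matching_def by simp
      then obtain M where M: "maximal_matching E M" "{x, w} \<in> M"
        using exists_maximal_matching_superset[OF finite_edges] by (metis insert_subset)
      then obtain m where m: "m \<in> M" "u \<in> m" using u(2) unfolding strong_vertex_def by blast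
      then have "m \<in> E" using matchingD(1)[OF maximal_matchingD[OF M(1)]] by blast
      then obtain p where "p \<in> W" "m = {u, p}" using edge_at_U[OF _ u(1) m(2)] by blast
      moreover have "p \<in> nbhd E u" using \<open>m \<in> E\<close> calculation(2) by (simp add: nbhd_def)
      ultimately have "m = {u, w}" using Nu by simp
      then have "m \<noteq> {x, w}" "m \<inter> {x, w} \<noteq> {}" using \<open>x \<notin> {u}\<close> by (auto simp: doubleton_eq_iff)
      then show False using matchingD(2)[OF maximal_matchingD[OF M(1)] m(1) M(2)] by blast
    qed
  qed
  have "card U > 0" using u(1) finite_sides(1) by (auto simp: card_gt_0_iff)
  then have "\<not> W \<subseteq> {w}" using UW card_mono[of "{w}" W] by auto
  then obtain w' where "w' \<in> W" "w' \<notin> {u, w}" using u(1) disjoint_sides by auto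
  then obtain a b where ab: "{a, b} \<in> E" "a \<in> {u, w}" "b \<notin> {u, w}"
    using connected_graph_edge_leaving[OF conn _ _ _ \<open>w' \<notin> {u, w}\<close>] u(1) by blast
  then have "b \<in> nbhd E a" by (simp add: nbhd_def)
  then show False using ab(2,3) Nu Nw by blast
qed

lemma maximal_matching_insert_deleted:
  assumes strong: "\<forall>x\<in>U. strong_vertex E x" and e: "{u, w} \<in> E" "u \<in> U"
    and M: "maximal_matching (delete_vertex E w) M" "u \<notin> \<Union>M"
  shows "maximal_matching E (insert {u, w} M)" and "maximal_matching (E - {{u, w}}) M"
proof -
  have mM: "matching (delete_vertex E w) M" by (rule maximal_matchingD[OF M(1)])
  have MD: "M \<subseteq> delete_vertex E w" by (rule matchingD(1)[OF mM])
  then have "w \<notin> \<Union>M" "M \<subseteq> E" unfolding delete_vertex_def by blast+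
  have mE: "matching E M" using matching_mono[OF mM order_refl \<open>M \<subseteq> E\<close>] .
  have "{u, w} \<notin> M" using M(2) by blast
  moreover have "\<forall>m\<in>M. m \<inter> {u, w} = {}" using M(2) \<open>w \<notin> \<Union>M\<close> by blast
  ultimately have mI: "matching E (insert {u, w} M)" using matching_insert_iff[OF mE e(1)] by simp
  have "\<forall>f\<in>E. w \<in> f \<longrightarrow> f \<inter> \<Union>(insert {u, w} M) \<noteq> {}" by blast
  from maximal_matching_extend_delete_vertex[OF M(1) mI subset_insertI this]
  show max: "maximal_matching E (insert {u, w} M)" .
  have "w \<in> W" using e nbhd_U[OF e(2)] unfolding nbhd_def by blast
  show "maximal_matching (E - {{u, w}}) M"
    unfolding maximal_matching_iff
  proof (intro conjI ballI)
    have "M \<subseteq> E - {{u, w}}" using \<open>M \<subseteq> E\<close> \<open>{u, w} \<notin> M\<close> by blast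
    then show "matching (E - {{u, w}}) M" using matching_mono[OF mE order_refl] by blast
  next
    fix f assume f: "f \<in> E - {{u, w}} - M"
    show "\<exists>m\<in>M. m \<inter> f \<noteq> {}"
    proof (cases "w \<in> f")
      case False
      then have "f \<in> delete_vertex E w - M" using f unfolding delete_vertex_def by blast
      then show ?thesis using M(1) unfolding maximal_matching_iff by blast
    next
      case True
      have "f \<in> E" using f by blast
      then obtain x where x: "x \<in> U" "f = {x, w}" using edge_at_W[OF _ \<open>w \<in> W\<close> True] by blast
      then have "x \<noteq> u" using f by blast
      have "x \<noteq> w" using x(1) \<open>w \<in> W\<close> disjoint_sides by blast
      have "x \<in> \<Union>(insert {u, w} M)" using strong x(1) max unfolding strong_vertex_def by blast
      then obtain m where "m \<in> M" "x \<in> m" using \<open>x \<noteq> u\<close> \<open>x \<noteq> w\<close> by blast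
      then show ?thesis using x(2) by blast
    qed
  qed
qed

lemma square_strong_if_edge_stable:
  assumes conn: "connected_graph (U \<union> W) E" and UW: "card U < card W"
    and stable: "edge_stable_equimatchable E" and u: "u \<in> U"
  shows "square_strong E u"
proof -
  have eq: "equimatchable E" using stable unfolding edge_stable_equimatchable_def by blast
  have "\<forall>S\<subseteq>U. card S \<le> card (nbhd_set E S)"
    using hall_condition_if_equimatchable[OF conn UW eq] by blast
  then have strong: "\<forall>x\<in>U. strong_vertex E x" by (rule strong_if_hall_condition[OF eq])
  have "strong_vertex (delete_vertex E w) u" if w: "w \<in> nbhd E u" for w
  proof (rule ccontr)
    assume "\<not> strong_vertex (delete_vertex E w) u"
    then obtain M where M: "maximal_matching (delete_vertex E w) M" "u \<notin> \<Union>M"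
      unfolding strong_vertex_def by blast
    have e: "{u, w} \<in> E" using w by (simp add: nbhd_def)
    note maxs = maximal_matching_insert_deleted[OF strong e u M]
    have "finite M" using finite_edges matchingD(1)[OF maximal_matchingD[OF maxs(2)]]
      by (blast intro: finite_subset)
    moreover have "{u, w} \<notin> M" using M(2) by blast
    ultimately have "card M + 1 = card U"
      using card_maximal_matching_if_strong[OF strong maxs(1)] by simp
    have "strong_vertex E u" using strong u by blast
    then obtain w' where w': "w' \<in> nbhd E u" "w' \<noteq> w"
      using nbhd_not_singleton_if_strong[OF conn UW u _ w] by blast
    then have "matching E {{u, w'}}" unfolding matching_def nbhd_def by simp
    then obtain M' where M': "maximal_matching E M'" "{u, w'} \<in> M'"
      using exists_maximal_matching_superset[OF finite_edges] by (metis insert_subset)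
    have "{u, w} \<notin> M'"
    proof
      assume "{u, w} \<in> M'"
      moreover have "{u, w} \<noteq> {u, w'}" using w'(2) by (auto simp: doubleton_eq_iff)
      ultimately show False using matchingD(2)[OF maximal_matchingD[OF M'(1)] _ M'(2)] by blast
    qed
    then have "M' \<subseteq> E - {{u, w}}" using matchingD(1)[OF maximal_matchingD[OF M'(1)]] by blast
    then have "maximal_matching (E - {{u, w}}) M'" using maximal_matching_subgraph[OF M'(1)] by blast
    moreover have "equimatchable (E - {{u, w}})"
      using stable e unfolding edge_stable_equimatchable_def by blast
    ultimately have "card M = card M'" using maxs(2) unfolding equimatchable_def by blast
    moreover have "card M' = card U" using card_maximal_matching_if_strong[OF strong M'(1)] .
    ultimately show False using \<open>card M + 1 = card U\<close> by simp
  qed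
  then show ?thesis using strong u unfolding square_strong_def by blast
qed

end

lemma bipartite_graph_if_bipartition:
  assumes "simple_graph V E" "bipartition V E U W"
  shows "bipartite_graph U W E"
proof
  have "finite V" "U \<union> W = V" using assms unfolding simple_graph_def bipartition_def by auto
  then show "finite U" "finite W" by auto
  show "U \<inter> W = {}" "\<And>e. e \<in> E \<Longrightarrow> \<exists>u\<in>U. \<exists>w\<in>W. e = {u, w}"
    using assms(2) unfolding bipartition_def by auto
qed

theorem proposition5p3:
  fixes V U W :: "'a set" and E :: "'a set set"
  assumes "simple_graph V E"
    and "connected_graph V E"
    and "bipartition V E U W"
    and "card U < card W"
  shows "(edge_stable_equimatchable E \<longleftrightarrow> (\<forall>u\<in>U. square_strong E u))
       \<and> ((\<forall>u\<in>U. square_strong E u) \<longleftrightarrow>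
          (\<forall>u\<in>U. \<exists>S. S \<noteq> {} \<and> S \<subseteq> nbhd E u \<and> card (nbhd_set E S) \<le> card S - 1))"
proof -
  interpret bipartite_graph U W E using bipartite_graph_if_bipartition[OF assms(1,3)] .
  have conn: "connected_graph (U \<union> W) E" using assms(2,3) unfolding bipartition_def by simp
  have "edge_stable_equimatchable E \<longleftrightarrow> (\<forall>u\<in>U. square_strong E u)"
    using edge_stable_if_square_strong square_strong_if_edge_stable[OF conn assms(4)] by blast
  moreover have "(\<forall>u\<in>U. square_strong E u) \<longleftrightarrow>
      (\<forall>u\<in>U. \<exists>S. S \<noteq> {} \<and> S \<subseteq> nbhd E u \<and> card (nbhd_set E S) \<le> card S - 1)"
    using square_strong_iff_deficient_subset by (simp cong: ball_cong)
  ultimately show ?thesis ..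
qed

end
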